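(* Let $t$ be a positive integer and $\lambda=\{k_1,\dots,k_q\}$ a multiset of positive integers. Suppose there are $K_t$-minor-free graphs $H_1$ and $H_2$, a clique $K=\{v_1,\dots,v_p\}$ in $H_1$, a $q$-tuple $\mathcal{C}=(C_1,\dots,C_q)$ of pairwise disjoint colour sets, and a $(\lambda,\mathcal{C})$-list assignment $L$ of $H_2$ such that: for every $L$-colouring $\psi$ of $H_2$, there is a $p$-clique $K_\psi=\{v_{\psi,1},\dots,v_{\psi,p}\}$ in $H_2$ such that there exists a $\psi|_{K_\psi}$-obstacle $L_\psi$ for $(H_1,K,\mathcal{C})$ (where $\psi|_{K_\psi}$ is regarded as a proper colouring of the $p$-clique $K_\psi$ with vertices ordered $v_{\psi,1},\dots,v_{\psi,p}$). Then there is a $K_t$-minor-free graph $G$ that is not $\lambda$-choosable.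
   Context: All graphs are finite and simple. A graph is $K_t$-minor-free if $K_t$ cannot be obtained from a subgraph of it by contracting edges. A list assignment $L$ of $G$ assigns to each vertex $v$ a set $L(v)$ of colours; an $L$-colouring is a proper colouring $f$ with $f(v)\in L(v)$ for all $v$. For a multiset $\lambda=\{k_1,\dots,k_q\}$ of positive integers, a $\lambda$-list assignment of $G$ is a list assignment $L$ such that $\bigcup_{v}L(v)$ can be partitioned into $q$ sets $C_1,\dots,C_q$ with $|L(v)\cap C_i|\ge k_i$ for all $i$ and $v$; $G$ is $\lambda$-choosable if it is $L$-colourable for every $\lambda$-list assignment $L$. Given a $q$-tuple $\mathcal{C}=(C_1,\dots,C_q)$ of disjoint colour sets, a $(\lambda,\mathcal{C})$-list assignment of a graph $G$ is a list assignment $L$ with $|L(v)\cap C_i|\ge k_i$ for every vertex $v$ and every $i$. If $K=\{v_1,\dots,v_p\}$ is a clique in $G$, $K'=\{v'_1,\dots,v'_p\}$ is a $p$-clique (disjoint from $G$) and $\psi'$ is a proper colouring of $K'$, then a $(\lambda,\mathcal{C})$-list assignment $L$ of $G$ is a $\psi'$-obstacle for $(G,K,\mathcal{C})$ if the colouring $\psi$ of $K$ given by $\psi(v_i)=\psi'(v'_i)$ is an $L$-colouring of $K$ that cannot be extended to a proper $L$-colouring of $G$. *)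

theory Defs
  imports Main
begin

definition simple_graph :: "'v set \<Rightarrow> ('v \<Rightarrow> 'v \<Rightarrow> bool) \<Rightarrow> bool" where
  "simple_graph V E \<longleftrightarrow> finite V \<and>
     (\<forall>x y. E x y \<longrightarrow> x \<in> V \<and> y \<in> V \<and> x \<noteq> y \<and> E y x)"

definition connected_in :: "'v set \<Rightarrow> ('v \<Rightarrow> 'v \<Rightarrow> bool) \<Rightarrow> 'v set \<Rightarrow> bool" where
  "connected_in V E S \<longleftrightarrow> S \<subseteq> V \<and>
     (\<forall>x\<in>S. \<forall>y\<in>S. (\<lambda>a b. a \<in> S \<and> b \<in> S \<and> E a b)\<^sup>*\<^sup>* x y)"

text \<open>K_t is a minor of G: there are t pairwise disjoint nonempty branch sets,
  each inducing a connected subgraph, and any two of them joined by an edge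
  (equivalently, K_t is obtained from a subgraph by edge contractions).\<close>
definition has_K_minor :: "'v set \<Rightarrow> ('v \<Rightarrow> 'v \<Rightarrow> bool) \<Rightarrow> nat \<Rightarrow> bool" where
  "has_K_minor V E t \<longleftrightarrow> (\<exists>B :: nat \<Rightarrow> 'v set.
     (\<forall>i<t. B i \<noteq> {} \<and> connected_in V E (B i)) \<and>
     (\<forall>i<t. \<forall>j<t. i \<noteq> j \<longrightarrow> B i \<inter> B j = {} \<and> (\<exists>x\<in>B i. \<exists>y\<in>B j. E x y)))"

definition K_minor_free :: "'v set \<Rightarrow> ('v \<Rightarrow> 'v \<Rightarrow> bool) \<Rightarrow> nat \<Rightarrow> bool" where
  "K_minor_free V E t \<longleftrightarrow> \<not> has_K_minor V E t"

definition is_clique :: "'v set \<Rightarrow> ('v \<Rightarrow> 'v \<Rightarrow> bool) \<Rightarrow> 'v list \<Rightarrow> bool" where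
  "is_clique V E K \<longleftrightarrow> distinct K \<and> set K \<subseteq> V \<and>
     (\<forall>i<length K. \<forall>j<length K. i \<noteq> j \<longrightarrow> E (K ! i) (K ! j))"

definition list_assignment :: "'v set \<Rightarrow> ('v \<Rightarrow> 'c set) \<Rightarrow> bool" where
  "list_assignment V L \<longleftrightarrow> (\<forall>v\<in>V. finite (L v))"

definition proper_colouring :: "'v set \<Rightarrow> ('v \<Rightarrow> 'v \<Rightarrow> bool) \<Rightarrow> ('v \<Rightarrow> 'c) \<Rightarrow> bool" where
  "proper_colouring V E f \<longleftrightarrow> (\<forall>x\<in>V. \<forall>y\<in>V. E x y \<longrightarrow> f x \<noteq> f y)"

definition L_colouring :: "'v set \<Rightarrow> ('v \<Rightarrow> 'v \<Rightarrow> bool) \<Rightarrow> ('v \<Rightarrow> 'c set) \<Rightarrow> ('v \<Rightarrow> 'c) \<Rightarrow> bool" where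
  "L_colouring V E L f \<longleftrightarrow> proper_colouring V E f \<and> (\<forall>v\<in>V. f v \<in> L v)"

definition L_colourable :: "'v set \<Rightarrow> ('v \<Rightarrow> 'v \<Rightarrow> bool) \<Rightarrow> ('v \<Rightarrow> 'c set) \<Rightarrow> bool" where
  "L_colourable V E L \<longleftrightarrow> (\<exists>f. L_colouring V E L f)"

text \<open>The multiset lambda = {k_1,...,k_q} is represented by a list ks with q = length ks;
  colour classes are indexed by i < q.\<close>

definition lambda_list_assignment :: "'v set \<Rightarrow> nat list \<Rightarrow> ('v \<Rightarrow> 'c set) \<Rightarrow> bool" where
  "lambda_list_assignment V ks L \<longleftrightarrow> list_assignment V L \<and>
     (\<exists>C :: nat \<Rightarrow> 'c set.
        (\<Union>i<length ks. C i) = (\<Union>v\<in>V. L v) \<and>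
        (\<forall>i<length ks. \<forall>j<length ks. i \<noteq> j \<longrightarrow> C i \<inter> C j = {}) \<and>
        (\<forall>v\<in>V. \<forall>i<length ks. ks ! i \<le> card (L v \<inter> C i)))"

text \<open>lambda-choosability, for lists with colours drawn from the type 'c.\<close>
definition lambda_choosable :: "'c itself \<Rightarrow> 'v set \<Rightarrow> ('v \<Rightarrow> 'v \<Rightarrow> bool) \<Rightarrow> nat list \<Rightarrow> bool" where
  "lambda_choosable _ V E ks \<longleftrightarrow>
     (\<forall>L :: 'v \<Rightarrow> 'c set. lambda_list_assignment V ks L \<longrightarrow> L_colourable V E L)"

definition lambda_C_list_assignment ::
  "'v set \<Rightarrow> nat list \<Rightarrow> (nat \<Rightarrow> 'c set) \<Rightarrow> ('v \<Rightarrow> 'c set) \<Rightarrow> bool" where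
  "lambda_C_list_assignment V ks C L \<longleftrightarrow> list_assignment V L \<and>
     (\<forall>v\<in>V. \<forall>i<length ks. ks ! i \<le> card (L v \<inter> C i))"

text \<open>The clique K = [v_1,...,v_p] of G is a list; a proper colouring psi'
  of the p-clique K' = {v'_1,...,v'_p} is given by its colours psi' i = psi'(v'_{i+1}),
  i < p (proper on a clique = pairwise distinct).\<close>
definition proper_clique_colouring :: "nat \<Rightarrow> (nat \<Rightarrow> 'c) \<Rightarrow> bool" where
  "proper_clique_colouring p psi' \<longleftrightarrow> (\<forall>i<p. \<forall>j<p. i \<noteq> j \<longrightarrow> psi' i \<noteq> psi' j)"

definition obstacle ::
  "'v set \<Rightarrow> ('v \<Rightarrow> 'v \<Rightarrow> bool) \<Rightarrow> 'v list \<Rightarrow> nat list \<Rightarrow> (nat \<Rightarrow> 'c set)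
    \<Rightarrow> (nat \<Rightarrow> 'c) \<Rightarrow> ('v \<Rightarrow> 'c set) \<Rightarrow> bool" where
  "obstacle V E K ks C psi' L \<longleftrightarrow>
     proper_clique_colouring (length K) psi' \<and>
     lambda_C_list_assignment V ks C L \<and>
     (\<forall>i<length K. psi' i \<in> L (K ! i)) \<and>
     (\<forall>i<length K. \<forall>j<length K. E (K ! i) (K ! j) \<longrightarrow> psi' i \<noteq> psi' j) \<and>
     \<not> (\<exists>f. L_colouring V E L f \<and> (\<forall>i<length K. f (K ! i) = psi' i))"

end

theory Submission
  imports Defs "HOL-Library.FuncSet"
begin

(* Glue to H_2 one copy of H_1 for every L-colouring psi of H_2, identifying K in that copy
   with the clique K_psi. Each gluing is a clique-sum, and clique-sums of K_t-minor-free
   graphs are K_t-minor-free: a K_t model either has a branch set avoiding each side, and two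
   such branch sets cannot touch, or all branch sets meet one side, and then paths leaving
   that side can be shortcut through the separating clique.
   Give H_2 the lists L and the copy of psi the lists of the obstacle L_psi. An L-colouring of
   the glued graph restricts to an L-colouring psi of H_2 and, on the copy of psi, to an
   L_psi-colouring of H_1 extending psi on K_psi, which the obstacle forbids. Since the
   colour classes C_i are disjoint, these lists form a lambda-list assignment. *)

lemma simple_graph_edgeD:
  assumes "simple_graph V E" and "E x y"
  shows "x \<in> V \<and> y \<in> V"
  using assms unfolding simple_graph_def by blast

lemma rtranclp_map:
  assumes "\<And>x y. R x y \<Longrightarrow> S (h x) (h y)" and "R\<^sup>*\<^sup>* x y"
  shows "S\<^sup>*\<^sup>* (h x) (h y)"
  using assms(2) by induction (auto intro: rtranclp.rtrancl_into_rtrancl assms(1))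

locale clique_sum =
  fixes V1 :: "'v set" and E1 :: "'v \<Rightarrow> 'v \<Rightarrow> bool"
    and V2 :: "'v set" and E2 :: "'v \<Rightarrow> 'v \<Rightarrow> bool"
  assumes edges1: "E1 x y \<Longrightarrow> x \<in> V1 \<and> y \<in> V1"
    and edges2: "E2 x y \<Longrightarrow> x \<in> V2 \<and> y \<in> V2"
    and separator_clique: "x \<in> V1 \<inter> V2 \<Longrightarrow> y \<in> V1 \<inter> V2 \<Longrightarrow> x \<noteq> y \<Longrightarrow> E1 x y \<and> E2 x y"
begin

lemma path_projection:
  assumes "x \<in> B \<inter> V1" and "(\<lambda>a b. a \<in> B \<and> b \<in> B \<and> (E1 a b \<or> E2 a b))\<^sup>*\<^sup>* x y"
  shows "\<exists>y'\<in>B \<inter> V1. (\<lambda>a b. a \<in> B \<inter> V1 \<and> b \<in> B \<inter> V1 \<and> E1 a b)\<^sup>*\<^sup>* x y' \<and>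
           (y \<in> V1 \<longrightarrow> y' = y) \<and> (y \<notin> V1 \<longrightarrow> y' \<in> V2)"
  using assms(2)
proof (induction rule: rtranclp_induct)
  case base
  then show ?case using assms(1) by blast
next
  case (step y z)
  let ?R1 = "\<lambda>a b. a \<in> B \<inter> V1 \<and> b \<in> B \<inter> V1 \<and> E1 a b"
  from step.IH obtain y' where y': "y' \<in> B \<inter> V1" "?R1\<^sup>*\<^sup>* x y'"
    and "y \<in> V1 \<longrightarrow> y' = y" and "y \<notin> V1 \<longrightarrow> y' \<in> V2"
    by blast
  from step.hyps(2) have "z \<in> B" and "E1 y z \<or> E2 y z" by auto
  show ?case
  proof (cases "y \<in> V1 \<and> E1 y z")
    case True
    then have "?R1\<^sup>*\<^sup>* x z" "z \<in> V1"
      using y' \<open>y \<in> V1 \<longrightarrow> y' = y\<close> \<open>z \<in> B\<close> edges1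
      by (auto intro: rtranclp.rtrancl_into_rtrancl)
    then show ?thesis using \<open>z \<in> B\<close> by blast
  next
    case False
    then have "E2 y z" using \<open>E1 y z \<or> E2 y z\<close> edges1 by blast
    then have "y' \<in> V2" and "z \<in> V2"
      using edges2 \<open>y \<in> V1 \<longrightarrow> y' = y\<close> \<open>y \<notin> V1 \<longrightarrow> y' \<in> V2\<close> by auto
    show ?thesis
    proof (cases "z \<in> V1")
      case True
      then have "y' = z \<or> ?R1 y' z"
        using separator_clique y' \<open>z \<in> B\<close> \<open>y' \<in> V2\<close> \<open>z \<in> V2\<close> by blast
      then show ?thesis using y' True by (auto intro: rtranclp.rtrancl_into_rtrancl)
    next
      case False
      then show ?thesis using y' \<open>y' \<in> V2\<close> by blast
    qed
  qed
qed

lemma has_K_minor_restrict_first: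
  assumes branch: "\<forall>i<t. B i \<noteq> {} \<and> connected_in (V1 \<union> V2) (\<lambda>x y. E1 x y \<or> E2 x y) (B i)"
    and adjacent: "\<forall>i<t. \<forall>j<t. i \<noteq> j \<longrightarrow> B i \<inter> B j = {} \<and>
                     (\<exists>x\<in>B i. \<exists>y\<in>B j. E1 x y \<or> E2 x y)"
    and meets: "\<forall>i<t. B i \<inter> V1 \<noteq> {}"
  shows "has_K_minor V1 E1 t"
proof -
  have path_to: "\<exists>y'\<in>B i \<inter> V1. (\<lambda>a b. a \<in> B i \<inter> V1 \<and> b \<in> B i \<inter> V1 \<and> E1 a b)\<^sup>*\<^sup>* x y' \<and>
                   (y \<in> V1 \<longrightarrow> y' = y) \<and> (y \<in> V2 \<longrightarrow> y' \<in> V2)"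
    if "i < t" "x \<in> B i \<inter> V1" "y \<in> B i" for i x y
  proof -
    have "(\<lambda>a b. a \<in> B i \<and> b \<in> B i \<and> (E1 a b \<or> E2 a b))\<^sup>*\<^sup>* x y"
      using branch that unfolding connected_in_def by blast
    from path_projection[OF that(2) this] show ?thesis by blast
  qed
  show ?thesis
    unfolding has_K_minor_def
  proof (intro exI[of _ "\<lambda>i. B i \<inter> V1"] conjI allI impI)
    fix i assume "i < t"
    then show "B i \<inter> V1 \<noteq> {}" using meets by blast
    show "connected_in V1 E1 (B i \<inter> V1)"
      unfolding connected_in_def using path_to[OF \<open>i < t\<close>] by blast
  next
    fix i j assume "i < t" "j < t" "i \<noteq> j"
    then show "B i \<inter> V1 \<inter> (B j \<inter> V1) = {}" using adjacent by blast
    obtain x y where xy: "x \<in> B i" "y \<in> B j" "E1 x y \<or> E2 x y"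
      using adjacent \<open>i < t\<close> \<open>j < t\<close> \<open>i \<noteq> j\<close> by blast
    obtain x' where x': "x' \<in> B i \<inter> V1" "x \<in> V1 \<longrightarrow> x' = x" "x \<in> V2 \<longrightarrow> x' \<in> V2"
      using path_to[OF \<open>i < t\<close> _ xy(1)] meets \<open>i < t\<close> by blast
    obtain y' where y': "y' \<in> B j \<inter> V1" "y \<in> V1 \<longrightarrow> y' = y" "y \<in> V2 \<longrightarrow> y' \<in> V2"
      using path_to[OF \<open>j < t\<close> _ xy(2)] meets \<open>j < t\<close> by blast
    have "x' \<noteq> y'" using x' y' adjacent \<open>i < t\<close> \<open>j < t\<close> \<open>i \<noteq> j\<close> by blast
    \<comment> \<open>an edge leaving V1 is an E2-edge, whose ends project into the separator clique\<close>
    have "E1 x' y'"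
      using xy(3) x' y' \<open>x' \<noteq> y'\<close> edges1 edges2 separator_clique by blast
    then show "\<exists>x\<in>B i \<inter> V1. \<exists>y\<in>B j \<inter> V1. E1 x y" using x' y' by blast
  qed
qed

lemma K_minor_free_union:
  assumes "K_minor_free V1 E1 t" and "K_minor_free V2 E2 t"
  shows "K_minor_free (V1 \<union> V2) (\<lambda>x y. E1 x y \<or> E2 x y) t"
  unfolding K_minor_free_def
proof
  assume "has_K_minor (V1 \<union> V2) (\<lambda>x y. E1 x y \<or> E2 x y) t"
  then obtain B where
    branch: "\<forall>i<t. B i \<noteq> {} \<and> connected_in (V1 \<union> V2) (\<lambda>x y. E1 x y \<or> E2 x y) (B i)"
    and adjacent: "\<forall>i<t. \<forall>j<t. i \<noteq> j \<longrightarrow> B i \<inter> B j = {} \<and>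
                     (\<exists>x\<in>B i. \<exists>y\<in>B j. E1 x y \<or> E2 x y)"
    unfolding has_K_minor_def by blast
  interpret swapped: clique_sum V2 E2 V1 E1
    using edges1 edges2 separator_clique by unfold_locales blast+
  have swap: "V2 \<union> V1 = V1 \<union> V2" "(\<lambda>x y. E2 x y \<or> E1 x y) = (\<lambda>x y. E1 x y \<or> E2 x y)"
    by auto
  consider "\<forall>i<t. B i \<inter> V1 \<noteq> {}" | "\<forall>i<t. B i \<inter> V2 \<noteq> {}"
    | i j where "i < t" "j < t" "B i \<inter> V1 = {}" "B j \<inter> V2 = {}"
    by blast
  then show False
  proof cases
    case 1
    then show False
      using has_K_minor_restrict_first[OF branch adjacent] assms(1) unfolding K_minor_free_def by blast
  next
    case 2
    then show False
      using swapped.has_K_minor_restrict_first[of t B] branch adjacent assms(2)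
      unfolding K_minor_free_def swap by blast
  next
    case 3
    then have "i \<noteq> j" using branch unfolding connected_in_def by blast
    then show False using 3 adjacent edges1 edges2 by blast
  qed
qed

end

lemma simple_graph_family_union:
  assumes "simple_graph V0 E0" and "finite S" and "\<And>s. s \<in> S \<Longrightarrow> simple_graph (W s) (F s)"
  shows "simple_graph (V0 \<union> (\<Union>s\<in>S. W s)) (\<lambda>x y. E0 x y \<or> (\<exists>s\<in>S. F s x y))"
  using assms unfolding simple_graph_def by blast

lemma K_minor_free_family_clique_sum:
  assumes "finite S"
    and "simple_graph V0 E0" and "K_minor_free V0 E0 t"
    and "\<And>s. s \<in> S \<Longrightarrow> simple_graph (W s) (F s)"
    and "\<And>s. s \<in> S \<Longrightarrow> K_minor_free (W s) (F s) t"
    and "\<And>s s'. s \<in> S \<Longrightarrow> s' \<in> S \<Longrightarrow> s \<noteq> s' \<Longrightarrow> W s \<inter> W s' \<subseteq> V0"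
    and "\<And>s x y. s \<in> S \<Longrightarrow> x \<in> W s \<inter> V0 \<Longrightarrow> y \<in> W s \<inter> V0 \<Longrightarrow> x \<noteq> y \<Longrightarrow> E0 x y \<and> F s x y"
  shows "K_minor_free (V0 \<union> (\<Union>s\<in>S. W s)) (\<lambda>x y. E0 x y \<or> (\<exists>s\<in>S. F s x y)) t"
  using assms
proof (induction S rule: finite_induct)
  case empty
  then show ?case by simp
next
  case (insert s S)
  let ?V = "V0 \<union> (\<Union>s\<in>S. W s)" and ?E = "\<lambda>x y. E0 x y \<or> (\<exists>s\<in>S. F s x y)"
  have clique: "E0 x y \<and> F s' x y"
    if "s' \<in> S" "x \<in> W s' \<inter> V0" "y \<in> W s' \<inter> V0" "x \<noteq> y" for s' x y
    using insert.prems(6)[of s' x y] that by simp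
  have "K_minor_free ?V ?E t"
  proof (rule insert.IH[OF insert.prems(1,2)])
    show "simple_graph (W s') (F s')" if "s' \<in> S" for s'
      using that insert.prems(3) by simp
    show "K_minor_free (W s') (F s') t" if "s' \<in> S" for s'
      using that insert.prems(4) by simp
    show "W s1 \<inter> W s2 \<subseteq> V0" if "s1 \<in> S" "s2 \<in> S" "s1 \<noteq> s2" for s1 s2
      using that insert.prems(5) by simp
  qed (rule clique)
  moreover have "simple_graph ?V ?E"
    using insert.hyps(1) insert.prems(1,3) by (intro simple_graph_family_union) auto
  moreover have "W s \<inter> ?V \<subseteq> V0"
    using insert.prems(5) insert.hyps(2) by blast
  moreover have "simple_graph (W s) (F s)"
    using insert.prems(3) by simp
  ultimately interpret clique_sum "W s" "F s" ?V ?E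
  proof unfold_locales
    fix x y
    show "F s x y \<Longrightarrow> x \<in> W s \<and> y \<in> W s"
      using simple_graph_edgeD[OF \<open>simple_graph (W s) (F s)\<close>] .
    show "?E x y \<Longrightarrow> x \<in> ?V \<and> y \<in> ?V"
      using simple_graph_edgeD[OF \<open>simple_graph ?V ?E\<close>] .
    assume "x \<in> W s \<inter> ?V" "y \<in> W s \<inter> ?V" "x \<noteq> y"
    then have "x \<in> W s \<inter> V0" "y \<in> W s \<inter> V0"
      using \<open>W s \<inter> ?V \<subseteq> V0\<close> by blast+
    then show "F s x y \<and> ?E x y"
      using insert.prems(6)[of s x y] \<open>x \<noteq> y\<close> by simp
  qed
  have "K_minor_free (W s \<union> ?V) (\<lambda>x y. F s x y \<or> ?E x y) t"
    using K_minor_free_union insert.prems \<open>K_minor_free ?V ?E t\<close> by blast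
  moreover have "W s \<union> ?V = V0 \<union> (\<Union>s\<in>insert s S. W s)"
    and "(\<lambda>x y. F s x y \<or> ?E x y) = (\<lambda>x y. E0 x y \<or> (\<exists>s'\<in>insert s S. F s' x y))"
    by auto
  ultimately show ?case by simp
qed

definition map_edges :: "('a \<Rightarrow> 'b) \<Rightarrow> ('a \<Rightarrow> 'a \<Rightarrow> bool) \<Rightarrow> 'b \<Rightarrow> 'b \<Rightarrow> bool" where
  "map_edges f E x y \<longleftrightarrow> (\<exists>a b. x = f a \<and> y = f b \<and> E a b)"

lemma map_edgesI: "E a b \<Longrightarrow> map_edges f E (f a) (f b)"
  unfolding map_edges_def by blast

lemma simple_graph_image:
  assumes "inj_on f V" and "simple_graph V E"
  shows "simple_graph (f ` V) (map_edges f E)"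
  using assms unfolding simple_graph_def map_edges_def by (blast dest: inj_onD)

lemma has_K_minor_of_image:
  assumes inj: "inj_on f V" and edges: "\<And>a b. E a b \<Longrightarrow> a \<in> V \<and> b \<in> V"
    and "has_K_minor (f ` V) (map_edges f E) t"
  shows "has_K_minor V E t"
proof -
  obtain B where
    branch: "\<forall>i<t. B i \<noteq> {} \<and> connected_in (f ` V) (map_edges f E) (B i)"
    and adjacent: "\<forall>i<t. \<forall>j<t. i \<noteq> j \<longrightarrow> B i \<inter> B j = {} \<and>
                     (\<exists>x\<in>B i. \<exists>y\<in>B j. map_edges f E x y)"
    using assms(3) unfolding has_K_minor_def by blast
  let ?g = "inv_into V f"
  have edge_back: "(\<lambda>a b. a \<in> V \<inter> f -` B i \<and> b \<in> V \<inter> f -` B i \<and> E a b) (?g x) (?g y)"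
    if "x \<in> B i" "y \<in> B i" "map_edges f E x y" for i x y
    using that edges inj unfolding map_edges_def by auto
  show ?thesis
    unfolding has_K_minor_def
  proof (intro exI[of _ "\<lambda>i. V \<inter> f -` B i"] conjI allI impI)
    fix i assume "i < t"
    then show "V \<inter> f -` B i \<noteq> {}"
      using branch unfolding connected_in_def by blast
    show "connected_in V E (V \<inter> f -` B i)"
      unfolding connected_in_def
    proof (intro conjI ballI)
      fix a b assume ab: "a \<in> V \<inter> f -` B i" "b \<in> V \<inter> f -` B i"
      then have "(\<lambda>x y. x \<in> B i \<and> y \<in> B i \<and> map_edges f E x y)\<^sup>*\<^sup>* (f a) (f b)"
        using branch \<open>i < t\<close> unfolding connected_in_def by blast
      then have "(\<lambda>x y. x \<in> V \<inter> f -` B i \<and> y \<in> V \<inter> f -` B i \<and> E x y)\<^sup>*\<^sup>*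
                   (?g (f a)) (?g (f b))"
        by (rule rtranclp_map[rotated]) (use edge_back in blast)
      then show "(\<lambda>x y. x \<in> V \<inter> f -` B i \<and> y \<in> V \<inter> f -` B i \<and> E x y)\<^sup>*\<^sup>* a b"
        using ab inj by simp
    qed auto
  next
    fix i j assume "i < t" "j < t" "i \<noteq> j"
    then show "V \<inter> f -` B i \<inter> (V \<inter> f -` B j) = {}"
      using adjacent by blast
    show "\<exists>x\<in>V \<inter> f -` B i. \<exists>y\<in>V \<inter> f -` B j. E x y"
      using adjacent \<open>i < t\<close> \<open>j < t\<close> \<open>i \<noteq> j\<close> edges unfolding map_edges_def by blast
  qed
qed

lemma K_minor_free_image:
  assumes "inj_on f V" and "\<And>a b. E a b \<Longrightarrow> a \<in> V \<and> b \<in> V" and "K_minor_free V E t"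
  shows "K_minor_free (f ` V) (map_edges f E) t"
  using assms has_K_minor_of_image unfolding K_minor_free_def by blast

lemma lambda_choosable_of_image:
  fixes E :: "'v \<Rightarrow> 'v \<Rightarrow> bool" and f :: "'v \<Rightarrow> 'w"
  assumes inj: "inj_on f V" and choosable: "lambda_choosable TYPE('c) (f ` V) (map_edges f E) ks"
  shows "lambda_choosable TYPE('c) V E ks"
  unfolding lambda_choosable_def
proof (intro allI impI)
  fix L :: "'v \<Rightarrow> 'c set"
  assume "lambda_list_assignment V ks L"
  have "lambda_list_assignment (f ` V) ks (L \<circ> inv_into V f)"
    using \<open>lambda_list_assignment V ks L\<close> inj
    unfolding lambda_list_assignment_def list_assignment_def by auto
  then obtain h where h: "L_colouring (f ` V) (map_edges f E) (L \<circ> inv_into V f) h"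
    using choosable unfolding lambda_choosable_def L_colourable_def by blast
  have "L_colouring V E L (h \<circ> f)"
    using h inj map_edgesI[of E _ _ f]
    unfolding L_colouring_def proper_colouring_def by auto
  then show "L_colourable V E L" unfolding L_colourable_def by blast
qed

lemma lambda_choosable_imp_L_colourable:
  assumes disjoint: "\<forall>i<length ks. \<forall>j<length ks. i \<noteq> j \<longrightarrow> C i \<inter> C j = {}"
    and L: "lambda_C_list_assignment V ks C L"
    and "lambda_choosable TYPE('c) V E ks"
  shows "L_colourable V E (L :: 'v \<Rightarrow> 'c set)"
proof -
  \<comment> \<open>Restricting the classes C i to the colours in use makes them partition the lists.\<close>
  define L' where "L' v = L v \<inter> (\<Union>i<length ks. C i)" for v
  define U where "U = (\<Union>v\<in>V. L' v)"
  have "lambda_list_assignment V ks L'"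
    unfolding lambda_list_assignment_def
  proof (intro conjI exI[of _ "\<lambda>i. C i \<inter> U"])
    show "list_assignment V L'"
      using L unfolding lambda_C_list_assignment_def list_assignment_def L'_def by blast
    show "(\<Union>i<length ks. C i \<inter> U) = (\<Union>v\<in>V. L' v)"
      unfolding U_def L'_def by blast
    show "\<forall>i<length ks. \<forall>j<length ks. i \<noteq> j \<longrightarrow> C i \<inter> U \<inter> (C j \<inter> U) = {}"
      using disjoint by blast
    have "L' v \<inter> (C i \<inter> U) = L v \<inter> C i" if "v \<in> V" "i < length ks" for v i
      using that unfolding L'_def U_def by blast
    then show "\<forall>v\<in>V. \<forall>i<length ks. ks ! i \<le> card (L' v \<inter> (C i \<inter> U))"
      using L unfolding lambda_C_list_assignment_def by simp
  qed
  then obtain f where "L_colouring V E L' f"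
    using assms(3) unfolding lambda_choosable_def L_colourable_def by blast
  then have "L_colouring V E L f" unfolding L_colouring_def L'_def by blast
  then show ?thesis unfolding L_colourable_def by blast
qed

locale obstacle_family =
  fixes V1 :: "'a set" and E1 :: "'a \<Rightarrow> 'a \<Rightarrow> bool"
    and V2 :: "'b set" and E2 :: "'b \<Rightarrow> 'b \<Rightarrow> bool"
    and K :: "'a list" and ks :: "nat list" and C :: "nat \<Rightarrow> 'c set" and L :: "'b \<Rightarrow> 'c set"
    and Kpsi :: "('b \<Rightarrow> 'c) \<Rightarrow> 'b list" and Lpsi :: "('b \<Rightarrow> 'c) \<Rightarrow> 'a \<Rightarrow> 'c set"
  assumes simple1: "simple_graph V1 E1" and simple2: "simple_graph V2 E2"
    and clique_K: "is_clique V1 E1 K"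
    and L_assignment: "lambda_C_list_assignment V2 ks C L"
    and clique_Kpsi: "L_colouring V2 E2 L psi \<Longrightarrow>
                        is_clique V2 E2 (Kpsi psi) \<and> length (Kpsi psi) = length K"
    and obstacle_Lpsi: "L_colouring V2 E2 L psi \<Longrightarrow>
                          obstacle V1 E1 K ks C (\<lambda>i. psi (Kpsi psi ! i)) (Lpsi psi)"
begin

(* Restricting to extensional functions makes the family of copies finite. *)
definition colourings :: "('b \<Rightarrow> 'c) set" where
  "colourings = {psi \<in> extensional V2. L_colouring V2 E2 L psi}"

(* The copy of H_1 indexed by psi: K ! i becomes the vertex Inl (Kpsi psi ! i) of H_2,
   every other vertex a becomes the fresh vertex Inr (psi, a). *)
definition glue :: "('b \<Rightarrow> 'c) \<Rightarrow> 'a \<Rightarrow> 'b + ('b \<Rightarrow> 'c) \<times> 'a" where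
  "glue psi a = (case map_of (zip K (Kpsi psi)) a of Some u \<Rightarrow> Inl u | None \<Rightarrow> Inr (psi, a))"

definition glued_vertices :: "('b + ('b \<Rightarrow> 'c) \<times> 'a) set" where
  "glued_vertices = Inl ` V2 \<union> (\<Union>psi\<in>colourings. glue psi ` V1)"

definition glued_edges :: "'b + ('b \<Rightarrow> 'c) \<times> 'a \<Rightarrow> 'b + ('b \<Rightarrow> 'c) \<times> 'a \<Rightarrow> bool" where
  "glued_edges =
     (\<lambda>x y. map_edges Inl E2 x y \<or> (\<exists>psi\<in>colourings. map_edges (glue psi) E1 x y))"

definition glued_lists :: "'b + ('b \<Rightarrow> 'c) \<times> 'a \<Rightarrow> 'c set" where
  "glued_lists v = (case v of Inl u \<Rightarrow> L u | Inr (psi, a) \<Rightarrow> Lpsi psi a)"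

lemma finite_colourings: "finite colourings"
proof (rule finite_subset)
  show "colourings \<subseteq> Pi\<^sub>E V2 L"
    unfolding colourings_def L_colouring_def by (auto simp: PiE_iff extensional_def)
  show "finite (Pi\<^sub>E V2 L)"
    using simple2 L_assignment
    unfolding simple_graph_def lambda_C_list_assignment_def list_assignment_def
    by (intro finite_PiE) auto
qed

lemma colouringsD:
  assumes "psi \<in> colourings"
  shows "is_clique V2 E2 (Kpsi psi)" and "length (Kpsi psi) = length K"
    and "obstacle V1 E1 K ks C (\<lambda>i. psi (Kpsi psi ! i)) (Lpsi psi)"
  using assms clique_Kpsi obstacle_Lpsi unfolding colourings_def by auto

lemma glue_nth:
  assumes "psi \<in> colourings" and "i < length K"
  shows "glue psi (K ! i) = Inl (Kpsi psi ! i)"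
  using assms colouringsD(2)[OF assms(1)] clique_K map_of_zip_nth[of K "Kpsi psi" i]
  unfolding is_clique_def glue_def by simp

lemma glue_notin:
  assumes "psi \<in> colourings" and "a \<notin> set K"
  shows "glue psi a = Inr (psi, a)"
proof -
  have "map_of (zip K (Kpsi psi)) a = None"
    using assms(2) colouringsD(2)[OF assms(1)] map_of_zip_is_None[of K "Kpsi psi" a] by simp
  then show ?thesis unfolding glue_def by simp
qed

lemma glue_Inl:
  assumes "psi \<in> colourings" and "glue psi a = Inl u"
  obtains i where "i < length K" "a = K ! i" "u = Kpsi psi ! i"
  using assms glue_nth glue_notin by (metis in_set_conv_nth sum.inject(1) sum.distinct(1))

lemma glue_Inr: "glue psi a = Inr q \<Longrightarrow> q = (psi, a)"
  unfolding glue_def by (auto split: option.splits)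

lemma Kpsi_nth_in_V2: "psi \<in> colourings \<Longrightarrow> i < length K \<Longrightarrow> Kpsi psi ! i \<in> V2"
  using colouringsD(1,2) unfolding is_clique_def by (metis nth_mem subsetD)

lemma inj_on_glue:
  assumes "psi \<in> colourings"
  shows "inj_on (glue psi) V1"
proof (rule inj_onI)
  fix a b assume glue_eq: "glue psi a = glue psi b"
  show "a = b"
  proof (cases "glue psi a")
    case (Inl u)
    then obtain i j where "i < length K" "a = K ! i" "u = Kpsi psi ! i"
      and "j < length K" "b = K ! j" "u = Kpsi psi ! j"
      using glue_Inl[OF assms] glue_eq by metis
    then show "a = b"
      using colouringsD(1,2)[OF assms] unfolding is_clique_def by (simp add: nth_eq_iff_index_eq)
  next
    case (Inr q)
    then show "a = b" using glue_Inr glue_eq by (metis prod.inject)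
  qed
qed

lemma glue_in_glued_vertices: "psi \<in> colourings \<Longrightarrow> a \<in> V1 \<Longrightarrow> glue psi a \<in> glued_vertices"
  unfolding glued_vertices_def by blast

lemma Inl_in_glued_vertices: "u \<in> V2 \<Longrightarrow> Inl u \<in> glued_vertices"
  unfolding glued_vertices_def by blast

lemma glue_images_inter:
  assumes "psi \<noteq> psi'" and "psi \<in> colourings"
  shows "glue psi ` V1 \<inter> glue psi' ` V1 \<subseteq> Inl ` V2"
proof
  fix x assume "x \<in> glue psi ` V1 \<inter> glue psi' ` V1"
  then obtain a b where "x = glue psi a" "x = glue psi' b" by blast
  then show "x \<in> Inl ` V2"
    using assms glue_Inr glue_Inl Kpsi_nth_in_V2 by (cases x) (blast, metis prod.inject)
qed

lemma glue_image_base_clique: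
  assumes "psi \<in> colourings" and "x \<in> glue psi ` V1 \<inter> Inl ` V2" and "y \<in> glue psi ` V1 \<inter> Inl ` V2"
    and "x \<noteq> y"
  shows "map_edges Inl E2 x y \<and> map_edges (glue psi) E1 x y"
proof -
  have on_clique: "\<exists>i<length K. x = glue psi (K ! i) \<and> x = Inl (Kpsi psi ! i)"
    if "x \<in> glue psi ` V1 \<inter> Inl ` V2" for x
    using that glue_Inl[OF assms(1)] by blast
  obtain i j where "i < length K" "x = glue psi (K ! i)" "x = Inl (Kpsi psi ! i)"
    and "j < length K" "y = glue psi (K ! j)" "y = Inl (Kpsi psi ! j)"
    using on_clique assms(2,3) by meson
  moreover have "i \<noteq> j" using calculation assms(4) by blast
  ultimately show ?thesis
    using clique_K colouringsD(1,2)[OF assms(1)] map_edgesI[of E2] map_edgesI[of E1]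
    unfolding is_clique_def by metis
qed

lemma simple_graph_glued: "simple_graph glued_vertices glued_edges"
  unfolding glued_vertices_def glued_edges_def
  using simple_graph_image[OF _ simple2, of Inl] simple_graph_image[OF inj_on_glue simple1]
    finite_colourings
  by (intro simple_graph_family_union) auto

lemma K_minor_free_glued:
  assumes "K_minor_free V1 E1 t" and "K_minor_free V2 E2 t"
  shows "K_minor_free glued_vertices glued_edges t"
  unfolding glued_vertices_def glued_edges_def
proof (rule K_minor_free_family_clique_sum)
  show "K_minor_free (Inl ` V2) (map_edges Inl E2) t"
    using assms(2) simple_graph_edgeD[OF simple2] by (intro K_minor_free_image) auto
  show "K_minor_free (glue psi ` V1) (map_edges (glue psi) E1) t" if "psi \<in> colourings" for psi
    using assms(1) simple_graph_edgeD[OF simple1] inj_on_glue[OF that]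
    by (intro K_minor_free_image) auto
qed (use finite_colourings simple_graph_image[OF _ simple2, of Inl]
       simple_graph_image[OF inj_on_glue simple1] glue_images_inter glue_image_base_clique in auto)

lemma lambda_C_list_assignment_glued: "lambda_C_list_assignment glued_vertices ks C glued_lists"
proof -
  have "(\<exists>u\<in>V2. glued_lists v = L u) \<or> (\<exists>psi\<in>colourings. \<exists>a\<in>V1. glued_lists v = Lpsi psi a)"
    if v: "v \<in> glued_vertices" for v
  proof (cases v)
    case (Inl u)
    then have "u \<in> V2 \<or> (\<exists>psi\<in>colourings. \<exists>a\<in>V1. glue psi a = Inl u)"
      using v unfolding glued_vertices_def by (auto simp: eq_commute[of "Inl u"])
    then have "u \<in> V2" by (metis glue_Inl Kpsi_nth_in_V2)
    then show ?thesis unfolding Inl glued_lists_def by auto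
  next
    case (Inr q)
    then obtain psi a where "psi \<in> colourings" "a \<in> V1" "glue psi a = Inr q"
      using v unfolding glued_vertices_def by auto
    then show ?thesis using glue_Inr unfolding Inr glued_lists_def by fastforce
  qed
  moreover have "lambda_C_list_assignment V1 ks C (Lpsi psi)" if "psi \<in> colourings" for psi
    using colouringsD(3)[OF that] unfolding obstacle_def by blast
  ultimately show ?thesis
    using L_assignment unfolding lambda_C_list_assignment_def list_assignment_def by metis
qed

lemma not_L_colourable_glued: "\<not> L_colourable glued_vertices glued_edges glued_lists"
proof
  assume "L_colourable glued_vertices glued_edges glued_lists"
  then obtain f where f: "L_colouring glued_vertices glued_edges glued_lists f"
    unfolding L_colourable_def by blast
  have f_proper: "f x \<noteq> f y"
    if "x \<in> glued_vertices" "y \<in> glued_vertices" "glued_edges x y" for x y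
    using f that unfolding L_colouring_def proper_colouring_def by blast
  have f_lists: "f x \<in> glued_lists x" if "x \<in> glued_vertices" for x
    using f that unfolding L_colouring_def by blast
  define psi where "psi = restrict (f \<circ> Inl) V2"
  have "L_colouring V2 E2 L psi"
    unfolding L_colouring_def proper_colouring_def
  proof (intro conjI ballI impI)
    fix u v assume "u \<in> V2" "v \<in> V2" "E2 u v"
    moreover have "glued_edges (Inl u) (Inl v)"
      using map_edgesI[of E2 u v Inl] \<open>E2 u v\<close> unfolding glued_edges_def by blast
    ultimately show "psi u \<noteq> psi v"
      using f_proper Inl_in_glued_vertices unfolding psi_def by simp
  next
    fix u assume "u \<in> V2"
    then show "psi u \<in> L u"
      using f_lists Inl_in_glued_vertices unfolding psi_def glued_lists_def by fastforce
  qed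
  then have psi: "psi \<in> colourings" unfolding colourings_def psi_def by simp
  note obstacle = colouringsD(3)[OF psi]
  have on_clique: "(f \<circ> glue psi) (K ! i) = psi (Kpsi psi ! i)" if "i < length K" for i
    using glue_nth[OF psi that] Kpsi_nth_in_V2[OF psi that] unfolding psi_def by simp
  have "L_colouring V1 E1 (Lpsi psi) (f \<circ> glue psi)"
    unfolding L_colouring_def proper_colouring_def
  proof (intro conjI ballI impI)
    fix a b assume "a \<in> V1" "b \<in> V1" "E1 a b"
    then show "(f \<circ> glue psi) a \<noteq> (f \<circ> glue psi) b"
      using f_proper glue_in_glued_vertices psi map_edgesI[of E1 a b "glue psi"]
      unfolding glued_edges_def by auto
  next
    fix a assume "a \<in> V1"
    show "(f \<circ> glue psi) a \<in> Lpsi psi a"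
    proof (cases "a \<in> set K")
      case True
      then obtain i where "i < length K" "a = K ! i" by (metis in_set_conv_nth)
      then show ?thesis using on_clique obstacle unfolding obstacle_def by auto
    next
      case False
      then show ?thesis
        using f_lists[OF glue_in_glued_vertices[OF psi \<open>a \<in> V1\<close>]] glue_notin[OF psi]
        unfolding glued_lists_def by simp
    qed
  qed
  then show False using on_clique obstacle unfolding obstacle_def by auto
qed

end

theorem lemma2:
  fixes t :: nat and ks :: "nat list"
    and V1 :: "'a set" and E1 :: "'a \<Rightarrow> 'a \<Rightarrow> bool"
    and V2 :: "'b set" and E2 :: "'b \<Rightarrow> 'b \<Rightarrow> bool"
    and K :: "'a list" and C :: "nat \<Rightarrow> 'c set" and L :: "'b \<Rightarrow> 'c set"
  assumes "t \<ge> 1"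
    and "\<forall>i<length ks. ks ! i \<ge> 1"
    and "simple_graph V1 E1" and "K_minor_free V1 E1 t"
    and "simple_graph V2 E2" and "K_minor_free V2 E2 t"
    and "is_clique V1 E1 K"
    and "\<forall>i<length ks. \<forall>j<length ks. i \<noteq> j \<longrightarrow> C i \<inter> C j = {}"
    and "lambda_C_list_assignment V2 ks C L"
    and "\<forall>psi. L_colouring V2 E2 L psi \<longrightarrow>
           (\<exists>Kpsi. is_clique V2 E2 Kpsi \<and> length Kpsi = length K \<and>
              (\<exists>Lpsi. obstacle V1 E1 K ks C (\<lambda>i. psi (Kpsi ! i)) Lpsi))"
  shows "\<exists>(V :: nat set) E. simple_graph V E \<and> K_minor_free V E t \<and>
           \<not> lambda_choosable TYPE('c) V E ks"
proof -
  obtain Kpsi Lpsi where "\<forall>psi. L_colouring V2 E2 L psi \<longrightarrow>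
      is_clique V2 E2 (Kpsi psi) \<and> length (Kpsi psi) = length K \<and>
      obstacle V1 E1 K ks C (\<lambda>i. psi (Kpsi psi ! i)) (Lpsi psi)"
    using assms(10) by metis
  then interpret obstacle_family V1 E1 V2 E2 K ks C L Kpsi Lpsi
    using assms(3,5,7,9) by unfold_locales auto
  obtain h :: "_ \<Rightarrow> nat" where h: "inj_on h glued_vertices"
    using finite_imp_inj_to_nat_seg simple_graph_glued unfolding simple_graph_def by metis
  have "simple_graph (h ` glued_vertices) (map_edges h glued_edges)"
    using simple_graph_image[OF h simple_graph_glued] .
  moreover have "K_minor_free (h ` glued_vertices) (map_edges h glued_edges) t"
    using K_minor_free_image[OF h _ K_minor_free_glued[OF assms(4,6)]]
      simple_graph_edgeD[OF simple_graph_glued] by blast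
  moreover have "\<not> lambda_choosable TYPE('c) (h ` glued_vertices) (map_edges h glued_edges) ks"
    using lambda_choosable_of_image[OF h] not_L_colourable_glued
      lambda_choosable_imp_L_colourable[OF assms(8) lambda_C_list_assignment_glued] by blast
  ultimately show ?thesis by blast
qed

end
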